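(* Let $q\in\mathbb H$. The function $s\mapsto\mathcal D S_L^{-1}(s,q)$, defined for $s\in\mathbb H\setminus[q]$, is intrinsic slice hyperholomorphic in $s$.
   Context: $\mathbb H$ denotes the quaternions; $\mathbb S$ is the sphere of unit purely imaginary quaternions; for $q=q_0+\underline q$, $[q]=\{q_0+J|\underline q|:J\in\mathbb S\}$. $S_L^{-1}(s,q):=(s-\bar q)(s^2-2\Re(q)s+|q|^2)^{-1}$ and $\mathcal D=\partial_{q_0}+\sum_{i=1}^3e_i\partial_{q_i}$ acts in the variable $q$. A function $h$ on an axially symmetric open set (with $u+Iv$ containing all $u+Jv$, $J\in\mathbb S$) is intrinsic slice hyperholomorphic if $h(u+Jv)=\alpha(u,v)+J\beta(u,v)$ for all $J\in\mathbb S$ with $\alpha,\beta$ real-valued differentiable, $\alpha(u,-v)=\alpha(u,v)$, $\beta(u,-v)=-\beta(u,v)$, $\partial_u\alpha=\partial_v\beta$, $\partial_v\alpha=-\partial_u\beta$. *)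

theory Defs
  imports "HOL-Analysis.Analysis"
begin

text \<open>Quaternions are modelled as real^4: q = q$1 + q$2 e1 + q$3 e2 + q$4 e3.
  The Euclidean norm of real^4 is the quaternion modulus.\<close>

type_synonym quat = "real^4"

definition qmul :: "quat \<Rightarrow> quat \<Rightarrow> quat" where
  "qmul p q = vector
     [p$1*q$1 - p$2*q$2 - p$3*q$3 - p$4*q$4,
      p$1*q$2 + p$2*q$1 + p$3*q$4 - p$4*q$3,
      p$1*q$3 - p$2*q$4 + p$3*q$1 + p$4*q$2,
      p$1*q$4 + p$2*q$3 - p$3*q$2 + p$4*q$1]"

definition qreal :: "real \<Rightarrow> quat" where
  "qreal r = vector [r, 0, 0, 0]"

definition qcnj :: "quat \<Rightarrow> quat" where
  "qcnj q = vector [q$1, - q$2, - q$3, - q$4]"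

definition qinv :: "quat \<Rightarrow> quat" where
  "qinv q = (1 / (norm q)\<^sup>2) *\<^sub>R qcnj q"

definition qRe :: "quat \<Rightarrow> real" where
  "qRe q = q$1"

definition qIm :: "quat \<Rightarrow> quat" where
  "qIm q = q - qreal (q$1)"

definition qsphere :: "quat set" where
  "qsphere = {J. J$1 = 0 \<and> norm J = 1}"

definition qclass :: "quat \<Rightarrow> quat set" where
  "qclass q = {qreal (qRe q) + norm (qIm q) *\<^sub>R J | J. J \<in> qsphere}"

definition SLinv :: "quat \<Rightarrow> quat \<Rightarrow> quat" where
  "SLinv s q = qmul (s - qcnj q)
      (qinv (qmul s s - (2 * qRe q) *\<^sub>R s + qreal ((norm q)\<^sup>2)))"

text \<open>Partial derivative of f with respect to the real coordinate q_i
  (index i::4; 1 = real part, 2,3,4 = e1,e2,e3 coordinates).\<close>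
definition qpartial :: "(quat \<Rightarrow> quat) \<Rightarrow> 4 \<Rightarrow> quat \<Rightarrow> quat" where
  "qpartial f i q = vector_derivative (\<lambda>t. f (q + t *\<^sub>R axis i 1)) (at 0)"

definition fueterD :: "(quat \<Rightarrow> quat) \<Rightarrow> quat \<Rightarrow> quat" where
  "fueterD f q = qpartial f 1 q
      + qmul (axis 2 1) (qpartial f 2 q)
      + qmul (axis 3 1) (qpartial f 3 q)
      + qmul (axis 4 1) (qpartial f 4 q)"

definition axially_symmetric :: "quat set \<Rightarrow> bool" where
  "axially_symmetric U \<longleftrightarrow>
     (\<forall>u v I J. I \<in> qsphere \<longrightarrow> J \<in> qsphere \<longrightarrow>
        qreal u + v *\<^sub>R I \<in> U \<longrightarrow> qreal u + v *\<^sub>R J \<in> U)"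

text \<open>Intrinsic slice hyperholomorphic functions on an axially symmetric open set U.
  The planar domain of alpha, beta is {(u,v). u + I v \<in> U} (independent of I \<in> S).\<close>
definition intrinsic_slice_hyperholomorphic :: "quat set \<Rightarrow> (quat \<Rightarrow> quat) \<Rightarrow> bool" where
  "intrinsic_slice_hyperholomorphic U h \<longleftrightarrow>
     open U \<and> axially_symmetric U \<and>
     (\<exists>\<alpha> \<beta> :: real \<times> real \<Rightarrow> real.
        (\<forall>J \<in> qsphere. \<forall>u v. qreal u + v *\<^sub>R J \<in> U \<longrightarrow>
            h (qreal u + v *\<^sub>R J) = qreal (\<alpha> (u, v)) + \<beta> (u, v) *\<^sub>R J) \<and>
        (\<forall>u v. (\<exists>J \<in> qsphere. qreal u + v *\<^sub>R J \<in> U) \<longrightarrow>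
            \<alpha> differentiable (at (u, v)) \<and> \<beta> differentiable (at (u, v)) \<and>
            \<alpha> (u, - v) = \<alpha> (u, v) \<and> \<beta> (u, - v) = - \<beta> (u, v) \<and>
            deriv (\<lambda>x. \<alpha> (x, v)) u = deriv (\<lambda>y. \<beta> (u, y)) v \<and>
            deriv (\<lambda>y. \<alpha> (u, y)) v = - deriv (\<lambda>x. \<beta> (x, v)) u))"

end

theory Submission
  imports Defs
begin

(* Put Q = Q_{c,s}(q) = s^2 - 2 Re(q) s + |q|^2, so that S_L^{-1}(s,q) = (s - conj q) Q^{-1}.
   The derivative of Q in the direction e_i is 2 q_i - 2 delta_{i0} s, a real combination of 1
   and s; it therefore commutes with Q and with Q^{-1}, and the i-th partial derivative of
   S_L^{-1} is -conj(e_i) Q^{-1} - (s - conj q) (d_i Q) Q^{-2}.  Summing against 1, e_1, e_2, e_3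
   gives D S_L^{-1}(s,q) = -4 Q^{-1} + 2 Q Q^{-2} = -2 Q^{-1}.
   On the slice s = u + J v this is the value in C_J of the holomorphic function
   F(z) = -2 / ((z - q_0)^2 + |q - q_0|^2) at z = u + i v.  F has real coefficients, so
   F(conj z) = conj F(z); its poles are the points of [q] seen in the slice; and Re F, Im F are
   the functions alpha, beta of the definition, with the Cauchy-Riemann equations of F. *)

section \<open>Quaternion algebra\<close>

lemma vector4_nth [simp]:
  "(vector [a, b, c, d] :: real^4) $ 1 = a" "(vector [a, b, c, d] :: real^4) $ 2 = b"
  "(vector [a, b, c, d] :: real^4) $ 3 = c" "(vector [a, b, c, d] :: real^4) $ 4 = d"
  unfolding vector_def by simp_all

lemma axis4_nth [simp]: "(axis (i::4) (1::real)) $ j = (if i = j then 1 else 0)"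
  by (simp add: axis_def)

lemma qreal_nth [simp]: "qreal r $ 1 = r" "qreal r $ 2 = 0" "qreal r $ 3 = 0" "qreal r $ 4 = 0"
  by (simp_all add: qreal_def)

lemma qcnj_nth [simp]:
  "qcnj q $ 1 = q $ 1" "qcnj q $ 2 = - q $ 2" "qcnj q $ 3 = - q $ 3" "qcnj q $ 4 = - q $ 4"
  by (simp_all add: qcnj_def)

lemma power2_norm_quat: "(norm (q :: quat))\<^sup>2 = (q$1)\<^sup>2 + (q$2)\<^sup>2 + (q$3)\<^sup>2 + (q$4)\<^sup>2"
  by (simp add: norm_vec_def L2_set_def sum_4)

lemma inner_quat: "(x :: quat) \<bullet> y = x$1 * y$1 + x$2 * y$2 + x$3 * y$3 + x$4 * y$4"
  by (simp add: inner_vec_def sum_4)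

lemma qreal_scaleR: "r *\<^sub>R qreal a = qreal (r * a)"
  by (simp add: vec_eq_iff forall_4)

lemma bounded_bilinear_qmul: "bounded_bilinear qmul"
proof -
  have "bilinear qmul"
    unfolding bilinear_def
    by (auto intro!: linearI simp: vec_eq_iff forall_4 qmul_def algebra_simps)
  then show ?thesis
    by (simp add: bilinear_conv_bounded_bilinear)
qed

interpretation qmul: bounded_bilinear qmul
  by (rule bounded_bilinear_qmul)

lemma bounded_linear_qcnj: "bounded_linear qcnj"
  by (auto intro!: linearI simp: vec_eq_iff forall_4 simp flip: linear_conv_bounded_linear)

lemma qmul_assoc: "qmul (qmul a b) c = qmul a (qmul b c)"
  by (simp add: vec_eq_iff forall_4 qmul_def; algebra)

lemma qmul_qreal_left [simp]: "qmul (qreal r) p = r *\<^sub>R p"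
  and qmul_qreal_right [simp]: "qmul p (qreal r) = r *\<^sub>R p"
  by (simp_all add: vec_eq_iff forall_4 qmul_def)

lemma qmul_qcnj_right: "qmul x (qcnj x) = qreal ((norm x)\<^sup>2)"
  and qmul_qcnj_left: "qmul (qcnj x) x = qreal ((norm x)\<^sup>2)"
  unfolding power2_norm_quat by (simp_all add: vec_eq_iff forall_4 qmul_def power2_eq_square)

lemma qmul_qcnj_sandwich:
  "qmul (qcnj x) (qmul h (qcnj x)) = (2 * (x \<bullet> h)) *\<^sub>R qcnj x - (norm x)\<^sup>2 *\<^sub>R qcnj h"
  unfolding power2_norm_quat inner_quat
  by (simp add: vec_eq_iff forall_4 qmul_def; algebra)

lemma qinv_0 [simp]: "qinv 0 = 0"
  by (simp add: qinv_def vec_eq_iff forall_4)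

lemma qmul_qinv_right: "x \<noteq> 0 \<Longrightarrow> qmul x (qinv x) = qreal 1"
  and qmul_qinv_left: "x \<noteq> 0 \<Longrightarrow> qmul (qinv x) x = qreal 1"
  by (simp_all add: qinv_def qmul.scaleR_right qmul.scaleR_left qmul_qcnj_right qmul_qcnj_left
      qreal_scaleR)

lemma qmul_qinv_commute:
  assumes "qmul a b = qmul b a"
  shows "qmul (qinv a) b = qmul b (qinv a)"
proof (cases "a = 0")
  case False
  have "qmul (qinv a) b = qmul (qinv a) (qmul (qmul b a) (qinv a))"
    using False by (simp add: qmul_assoc qmul_qinv_right)
  also have "\<dots> = qmul b (qinv a)"
    using False by (simp flip: assms qmul_assoc add: qmul_qinv_left)
  finally show ?thesis .
qed (simp add: qmul.zero_left qmul.zero_right)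

lemma has_vector_derivative_qinv:
  assumes N: "(N has_vector_derivative N') (at t)" and nz: "N t \<noteq> 0"
  shows "((\<lambda>t. qinv (N t)) has_vector_derivative - qmul (qinv (N t)) (qmul N' (qinv (N t)))) (at t)"
proof -
  have qinv_eq: "qinv x = inverse (x \<bullet> x) *\<^sub>R qcnj x" for x
    by (simp add: qinv_def power2_norm_eq_inner divide_inverse)
  have "N t \<bullet> N t \<noteq> 0"
    using nz by simp
  have "((\<lambda>t. N t \<bullet> N t) has_real_derivative 2 * (N t \<bullet> N')) (at t)"
    using bounded_bilinear.has_vector_derivative[OF bounded_bilinear_inner N N]
    by (simp add: has_real_derivative_iff_has_vector_derivative inner_commute)
  then have "((\<lambda>t. inverse (N t \<bullet> N t)) has_real_derivative
      - (inverse (N t \<bullet> N t) * (2 * (N t \<bullet> N')) * inverse (N t \<bullet> N t))) (at t)"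
    using \<open>N t \<bullet> N t \<noteq> 0\<close> by (rule DERIV_inverse')
  note has_vector_derivative_scaleR[OF this
      bounded_linear.has_vector_derivative[OF bounded_linear_qcnj N]]
  moreover have "- qmul (qinv (N t)) (qmul N' (qinv (N t))) =
      inverse (N t \<bullet> N t) *\<^sub>R qcnj N'
      - (inverse (N t \<bullet> N t) * (2 * (N t \<bullet> N')) * inverse (N t \<bullet> N t)) *\<^sub>R qcnj (N t)"
    using \<open>N t \<bullet> N t \<noteq> 0\<close>
    by (simp add: qinv_eq qmul.scaleR_left qmul.scaleR_right qmul_qcnj_sandwich
        power2_norm_eq_inner algebra_simps)
  ultimately show ?thesis
    unfolding qinv_eq by simp
qed

section \<open>Complex slices\<close>

definition qslice :: "quat \<Rightarrow> complex \<Rightarrow> quat" where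
  "qslice J z = qreal (Re z) + Im z *\<^sub>R J"

lemma qslice_Complex: "qslice J (Complex u v) = qreal u + v *\<^sub>R J"
  by (simp add: qslice_def)

lemma qsphereD: "J \<in> qsphere \<Longrightarrow> J$1 = 0 \<and> (J$2)\<^sup>2 + (J$3)\<^sup>2 + (J$4)\<^sup>2 = 1"
  unfolding qsphere_def using power2_norm_quat[of J] by auto

lemma qslice_of_real [simp]: "qslice J (of_real r) = qreal r"
  by (simp add: qslice_def)

lemma qslice_add: "qslice J (z + w) = qslice J z + qslice J w"
  and qslice_diff: "qslice J (z - w) = qslice J z - qslice J w"
  and qslice_scaleR: "qslice J (r *\<^sub>R z) = r *\<^sub>R qslice J z"
  by (simp_all add: qslice_def vec_eq_iff forall_4 algebra_simps)

lemma qmul_qslice: "J \<in> qsphere \<Longrightarrow> qmul (qslice J z) (qslice J w) = qslice J (z * w)"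
  by (drule qsphereD) (simp add: qslice_def vec_eq_iff forall_4 qmul_def; algebra)

lemma qcnj_qslice: "J \<in> qsphere \<Longrightarrow> qcnj (qslice J z) = qslice J (cnj z)"
  by (drule qsphereD) (simp add: qslice_def vec_eq_iff forall_4)

lemma norm_qslice:
  assumes "J \<in> qsphere"
  shows "norm (qslice J z) = cmod z"
proof -
  have J: "J$1 = 0" "(J$2)\<^sup>2 + (J$3)\<^sup>2 + (J$4)\<^sup>2 = 1"
    using qsphereD[OF assms] by auto
  have "(norm (qslice J z))\<^sup>2 = (Re z)\<^sup>2 + (Im z)\<^sup>2 * ((J$2)\<^sup>2 + (J$3)\<^sup>2 + (J$4)\<^sup>2)"
    using J(1) unfolding power2_norm_quat by (simp add: qslice_def power_mult_distrib algebra_simps)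
  then show ?thesis
    unfolding J(2) cmod_def by (simp flip: real_sqrt_unique)
qed

lemma qslice_eq_0_iff: "J \<in> qsphere \<Longrightarrow> qslice J z = 0 \<longleftrightarrow> z = 0"
  by (metis norm_eq_zero norm_qslice)

lemma qinv_qslice:
  assumes "J \<in> qsphere"
  shows "qinv (qslice J z) = qslice J (inverse z)"
proof -
  have "inverse z = (1 / (cmod z)\<^sup>2) *\<^sub>R cnj z"
    by (simp add: complex_eq_iff cmod_def power2_eq_square)
  then show ?thesis
    using assms by (simp add: qinv_def norm_qslice qcnj_qslice qslice_scaleR)
qed

lemma qRe_qslice: "J \<in> qsphere \<Longrightarrow> qRe (qslice J z) = Re z"
  and qIm_qslice: "J \<in> qsphere \<Longrightarrow> qIm (qslice J z) = Im z *\<^sub>R J"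
  by (auto dest: qsphereD simp: qslice_def qRe_def qIm_def vec_eq_iff forall_4)

lemma quat_slice_decomposition: "\<exists>J\<in>qsphere. s = qslice J (Complex (qRe s) (norm (qIm s)))"
proof (cases "qIm s = 0")
  case True
  have "axis 2 1 \<in> qsphere"
    by (simp add: qsphere_def)
  moreover have "s = qreal (qRe s)"
    using True by (simp add: qIm_def qRe_def)
  ultimately show ?thesis
    using True by (auto simp: qslice_def)
next
  case False
  define J where "J = qIm s /\<^sub>R norm (qIm s)"
  have "J \<in> qsphere"
    using False by (simp add: qsphere_def J_def qIm_def)
  moreover have "s = qslice J (Complex (qRe s) (norm (qIm s)))"
    using False by (simp add: qslice_def J_def qIm_def qRe_def)
  ultimately show ?thesis ..
qed

lemma qclass_iff: "s \<in> qclass q \<longleftrightarrow> qRe s = qRe q \<and> norm (qIm s) = norm (qIm q)"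
proof
  assume "s \<in> qclass q"
  then obtain J where "J \<in> qsphere" "s = qslice J (Complex (qRe q) (norm (qIm q)))"
    by (auto simp: qclass_def qslice_def)
  then show "qRe s = qRe q \<and> norm (qIm s) = norm (qIm q)"
    by (simp add: qRe_qslice qIm_qslice qsphere_def)
next
  assume "qRe s = qRe q \<and> norm (qIm s) = norm (qIm q)"
  then show "s \<in> qclass q"
    using quat_slice_decomposition[of s] by (auto simp: qclass_def qslice_def)
qed

section \<open>Intrinsic functions induced by holomorphic functions\<close>

lemma has_vector_derivative_Complex_lines:
  assumes F: "(F has_field_derivative F') (at (Complex u v))"
  shows "((\<lambda>x. F (Complex x v)) has_vector_derivative F') (at u)"
    and "((\<lambda>y. F (Complex u y)) has_vector_derivative \<i> * F') (at v)"
proof -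
  have "Complex x y = of_real x + \<i> * of_real y" for x y
    by (simp add: complex_eq_iff)
  then have "((\<lambda>x. Complex x v) has_vector_derivative 1) (at u)"
    and "((\<lambda>y. Complex u y) has_vector_derivative \<i>) (at v)"
    by (auto intro!: derivative_eq_intros)
  from this[THEN field_vector_diff_chain_at] F
  show "((\<lambda>x. F (Complex x v)) has_vector_derivative F') (at u)"
    and "((\<lambda>y. F (Complex u y)) has_vector_derivative \<i> * F') (at v)"
    by (auto simp: o_def)
qed

lemma cauchy_riemann_Complex:
  assumes "(F has_field_derivative F') (at (Complex u v))"
  shows "deriv (\<lambda>x. Re (F (Complex x v))) u = deriv (\<lambda>y. Im (F (Complex u y))) v"
    and "deriv (\<lambda>y. Re (F (Complex u y))) v = - deriv (\<lambda>x. Im (F (Complex x v))) u"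
  using has_vector_derivative_Complex_lines[OF assms, THEN has_field_derivative_Re, THEN DERIV_imp_deriv]
    has_vector_derivative_Complex_lines[OF assms, THEN has_field_derivative_Im, THEN DERIV_imp_deriv]
  by simp_all

lemma differentiable_Re_Im_Complex:
  assumes F: "(F has_field_derivative F') (at (Complex u v))"
  shows "(\<lambda>(x, y). Re (F (Complex x y))) differentiable at (u, v)"
    and "(\<lambda>(x, y). Im (F (Complex x y))) differentiable at (u, v)"
proof -
  have "bounded_linear (\<lambda>p. Complex (fst p) (snd p))"
    by (auto intro!: linearI simp: complex_eq_iff simp flip: linear_conv_bounded_linear)
  then have "((\<lambda>p. Complex (fst p) (snd p)) has_derivative (\<lambda>p. Complex (fst p) (snd p))) (at (u, v))"
    by (rule bounded_linear_imp_has_derivative)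
  from has_derivative_compose[OF this] F
  have "((\<lambda>p. F (Complex (fst p) (snd p))) has_derivative
      (\<lambda>h. F' * Complex (fst h) (snd h))) (at (u, v))"
    by (simp add: has_field_derivative_def)
  from this[THEN bounded_linear.has_derivative[OF bounded_linear_Re]]
    this[THEN bounded_linear.has_derivative[OF bounded_linear_Im]]
  show "(\<lambda>(x, y). Re (F (Complex x y))) differentiable at (u, v)"
    and "(\<lambda>(x, y). Im (F (Complex x y))) differentiable at (u, v)"
    by (auto simp: split_beta' intro: differentiableI)
qed

lemma intrinsic_slice_hyperholomorphicI:
  assumes "open U" and "axially_symmetric U"
    and slice: "\<And>J u v. J \<in> qsphere \<Longrightarrow> qreal u + v *\<^sub>R J \<in> U \<Longrightarrow>
      h (qreal u + v *\<^sub>R J) = qslice J (F (Complex u v))"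
    and holo: "\<And>J u v. J \<in> qsphere \<Longrightarrow> qreal u + v *\<^sub>R J \<in> U \<Longrightarrow>
      F field_differentiable at (Complex u v)"
    and real: "\<And>z. F (cnj z) = cnj (F z)"
  shows "intrinsic_slice_hyperholomorphic U h"
  unfolding intrinsic_slice_hyperholomorphic_def
proof (intro conjI exI ballI allI impI)
  let ?\<alpha> = "\<lambda>(x, y). Re (F (Complex x y))" and ?\<beta> = "\<lambda>(x, y). Im (F (Complex x y))"
  show "open U" "axially_symmetric U" by fact+
  show "h (qreal u + v *\<^sub>R J) = qreal (?\<alpha> (u, v)) + ?\<beta> (u, v) *\<^sub>R J"
    if "J \<in> qsphere" "qreal u + v *\<^sub>R J \<in> U" for J u v
    using slice[OF that] by (simp add: qslice_def)
  fix u v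
  assume "\<exists>J\<in>qsphere. qreal u + v *\<^sub>R J \<in> U"
  then obtain F' where F': "(F has_field_derivative F') (at (Complex u v))"
    using holo field_differentiable_def by blast
  show "?\<alpha> differentiable at (u, v)" "?\<beta> differentiable at (u, v)"
    using differentiable_Re_Im_Complex[OF F'] by simp_all
  show "deriv (\<lambda>x. ?\<alpha> (x, v)) u = deriv (\<lambda>y. ?\<beta> (u, y)) v"
    "deriv (\<lambda>y. ?\<alpha> (u, y)) v = - deriv (\<lambda>x. ?\<beta> (x, v)) u"
    using cauchy_riemann_Complex[OF F'] by simp_all
  show "?\<alpha> (u, - v) = ?\<alpha> (u, v)" "?\<beta> (u, - v) = - ?\<beta> (u, v)"
    using real[of "Complex u v"] by (simp_all add: complex_cnj)
qed

section \<open>The Fueter derivative of the Cauchy kernel\<close>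

definition Qcs :: "quat \<Rightarrow> quat \<Rightarrow> quat" where
  "Qcs s q = qmul s s - (2 * qRe q) *\<^sub>R s + qreal ((norm q)\<^sup>2)"

definition Qcs_deriv :: "quat \<Rightarrow> quat \<Rightarrow> quat \<Rightarrow> quat" where
  "Qcs_deriv s q h = qreal (2 * (q \<bullet> h)) - (2 * qRe h) *\<^sub>R s"

lemma SLinv_eq: "SLinv s q = qmul (s - qcnj q) (qinv (Qcs s q))"
  by (simp add: SLinv_def Qcs_def)

lemma continuous_on_Qcs: "continuous_on UNIV (\<lambda>s. Qcs s q)"
  unfolding Qcs_def by (intro continuous_intros qmul.continuous_on)

lemma has_vector_derivative_Qcs_line:
  "((\<lambda>t. Qcs s (q + t *\<^sub>R h)) has_vector_derivative Qcs_deriv s q h) (at 0)"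
proof -
  have "Qcs s (q + t *\<^sub>R h) = qmul s s - (2 * (q$1 + t * h$1)) *\<^sub>R s
      + (q \<bullet> q + 2 * t * (q \<bullet> h) + t\<^sup>2 * (h \<bullet> h)) *\<^sub>R qreal 1" for t
    unfolding Qcs_def power2_norm_eq_inner
    by (simp add: qRe_def qreal_scaleR inner_add_left inner_add_right inner_commute
        algebra_simps power2_eq_square)
  moreover have "((\<lambda>t. qmul s s - (2 * (q$1 + t * h$1)) *\<^sub>R s
      + (q \<bullet> q + 2 * t * (q \<bullet> h) + t\<^sup>2 * (h \<bullet> h)) *\<^sub>R qreal 1) has_vector_derivative
      (2 * (q \<bullet> h)) *\<^sub>R qreal 1 - (2 * h$1) *\<^sub>R s) (at 0)"
    by (auto intro!: derivative_eq_intros)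
  ultimately show ?thesis
    by (simp add: Qcs_deriv_def qRe_def qreal_scaleR)
qed

lemma qmul_Qcs_deriv_commute: "qmul (Qcs_deriv s q h) (Qcs s q) = qmul (Qcs s q) (Qcs_deriv s q h)"
  by (simp add: Qcs_def Qcs_deriv_def qmul.add_left qmul.add_right qmul.diff_left qmul.diff_right
      qmul.scaleR_left qmul.scaleR_right qmul_assoc qreal_scaleR algebra_simps)

lemma has_vector_derivative_qinv_Qcs_line:
  assumes "Qcs s q \<noteq> 0"
  defines "Qi \<equiv> qinv (Qcs s q)"
  shows "((\<lambda>t. qinv (Qcs s (q + t *\<^sub>R h))) has_vector_derivative
      - qmul (Qcs_deriv s q h) (qmul Qi Qi)) (at 0)"
proof -
  have deriv: "((\<lambda>t. qinv (Qcs s (q + t *\<^sub>R h))) has_vector_derivative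
      - qmul Qi (qmul (Qcs_deriv s q h) Qi)) (at 0)"
    unfolding Qi_def using has_vector_derivative_qinv[OF has_vector_derivative_Qcs_line] assms(1)
    by simp
  have "qmul Qi (Qcs_deriv s q h) = qmul (Qcs_deriv s q h) Qi"
    unfolding Qi_def by (intro qmul_qinv_commute qmul_Qcs_deriv_commute[symmetric])
  then have "qmul Qi (qmul (Qcs_deriv s q h) Qi) = qmul (Qcs_deriv s q h) (qmul Qi Qi)"
    by (metis qmul_assoc)
  with deriv show ?thesis
    by simp
qed

lemma qpartial_SLinv:
  assumes "Qcs s q \<noteq> 0"
  defines "Qi \<equiv> qinv (Qcs s q)"
  shows "qpartial (\<lambda>p. SLinv s p) i q = - qmul (qcnj (axis i 1)) Qi
      - qmul (s - qcnj q) (qmul (Qcs_deriv s q (axis i 1)) (qmul Qi Qi))"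
proof -
  have "((\<lambda>t. s - qcnj (q + t *\<^sub>R axis i 1)) has_vector_derivative - qcnj (axis i 1)) (at 0)"
    by (auto intro!: derivative_eq_intros bounded_linear.has_vector_derivative[OF bounded_linear_qcnj])
  from qmul.has_vector_derivative[OF this
      has_vector_derivative_qinv_Qcs_line[OF assms(1), where h = "axis i 1"]]
  have "((\<lambda>t. SLinv s (q + t *\<^sub>R axis i 1)) has_vector_derivative
      - qmul (qcnj (axis i 1)) Qi - qmul (s - qcnj q) (qmul (Qcs_deriv s q (axis i 1)) (qmul Qi Qi))) (at 0)"
    unfolding SLinv_eq Qi_def
    by (rule has_vector_derivative_eq_rhs) (simp add: qmul.minus_left qmul.minus_right)
  then show ?thesis
    unfolding qpartial_def by (rule vector_derivative_at)
qed

text \<open>Used with \<open>X = Q\<inverse>\<close> and \<open>Y = Q\<inverse>\<^sup>2\<close> for \<open>Q = Qcs s q\<close>; for arbitrary \<open>X\<close>, \<open>Y\<close>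
  it is a polynomial identity in the coordinates.\<close>
lemma fueter_sum_identity:
  fixes s q X Y :: quat
  defines "P h \<equiv> - qmul (qcnj h) X - qmul (s - qcnj q) (qmul (Qcs_deriv s q h) Y)"
  shows "P (axis 1 1) + qmul (axis 2 1) (P (axis 2 1)) + qmul (axis 3 1) (P (axis 3 1))
      + qmul (axis 4 1) (P (axis 4 1)) = (-4) *\<^sub>R X + 2 *\<^sub>R qmul (Qcs s q) Y"
  unfolding P_def Qcs_def Qcs_deriv_def power2_norm_quat
  by (simp add: vec_eq_iff forall_4 qmul_def qRe_def inner_axis; algebra)

lemma fueterD_SLinv:
  assumes "Qcs s q \<noteq> 0"
  shows "fueterD (\<lambda>p. SLinv s p) q = (-2) *\<^sub>R qinv (Qcs s q)"
proof -
  have "qmul (Qcs s q) (qmul (qinv (Qcs s q)) (qinv (Qcs s q))) = qinv (Qcs s q)"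
    using assms by (simp flip: qmul_assoc add: qmul_qinv_right)
  then show ?thesis
    unfolding fueterD_def qpartial_SLinv[OF assms] by (simp add: fueter_sum_identity)
qed

section \<open>The kernel on a complex slice\<close>

definition Qcs_complex :: "quat \<Rightarrow> complex \<Rightarrow> complex" where
  "Qcs_complex q z = z\<^sup>2 - of_real (2 * qRe q) * z + of_real ((norm q)\<^sup>2)"

lemma Qcs_qslice:
  assumes "J \<in> qsphere"
  shows "Qcs (qslice J z) q = qslice J (Qcs_complex q z)"
proof -
  have "Qcs_complex q z = z * z - (2 * qRe q) *\<^sub>R z + of_real ((norm q)\<^sup>2)"
    by (simp add: Qcs_complex_def power2_eq_square scaleR_conv_of_real)
  then show ?thesis
    using assms
    by (simp add: Qcs_def qmul_qslice qslice_add qslice_diff qslice_scaleR del: of_real_power)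
qed

lemma Qcs_complex_cnj: "Qcs_complex q (cnj z) = cnj (Qcs_complex q z)"
  by (simp add: Qcs_complex_def)

lemma Qcs_complex_Complex:
  "Qcs_complex q (Complex a b) =
    Complex ((a - qRe q)\<^sup>2 - b\<^sup>2 + (norm (qIm q))\<^sup>2) (2 * (a - qRe q) * b)"
proof -
  have "(norm q)\<^sup>2 = (qRe q)\<^sup>2 + (norm (qIm q))\<^sup>2"
    unfolding power2_norm_quat by (simp add: qRe_def qIm_def)
  then show ?thesis
    by (simp add: Qcs_complex_def complex_eq_iff power2_eq_square algebra_simps)
qed

lemma Qcs_complex_Complex_eq_0_iff:
  assumes "0 \<le> b"
  shows "Qcs_complex q (Complex a b) = 0 \<longleftrightarrow> a = qRe q \<and> b = norm (qIm q)"
proof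
  assume "Qcs_complex q (Complex a b) = 0"
  then have re: "(a - qRe q)\<^sup>2 - b\<^sup>2 + (norm (qIm q))\<^sup>2 = 0" and im: "(a - qRe q) * b = 0"
    by (simp_all add: Qcs_complex_Complex complex_eq_iff)
  show "a = qRe q \<and> b = norm (qIm q)"
  proof (cases "b = 0")
    case True
    with re have "(a - qRe q)\<^sup>2 + (norm (qIm q))\<^sup>2 = 0"
      by simp
    with True show ?thesis
      by (simp add: add_nonneg_eq_0_iff)
  next
    case False
    with im re have "a = qRe q" "b\<^sup>2 = (norm (qIm q))\<^sup>2"
      by simp_all
    with assms show ?thesis
      by (simp add: power2_eq_iff_nonneg)
  qed
qed (simp add: Qcs_complex_Complex complex_eq_iff)

lemma Qcs_eq_0_iff: "Qcs s q = 0 \<longleftrightarrow> s \<in> qclass q"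
proof -
  obtain J where J: "J \<in> qsphere" and s: "s = qslice J (Complex (qRe s) (norm (qIm s)))"
    using quat_slice_decomposition by blast
  have "Qcs s q = 0 \<longleftrightarrow> Qcs_complex q (Complex (qRe s) (norm (qIm s))) = 0"
    using J by (subst s) (simp add: Qcs_qslice qslice_eq_0_iff)
  then show ?thesis
    by (simp add: Qcs_complex_Complex_eq_0_iff qclass_iff)
qed

lemma qslice_in_qclass_iff: "J \<in> qsphere \<Longrightarrow> qslice J z \<in> qclass q \<longleftrightarrow> Qcs_complex q z = 0"
  by (simp flip: Qcs_eq_0_iff add: Qcs_qslice qslice_eq_0_iff)

lemma open_compl_qclass: "open (UNIV - qclass q)"
  using open_Collect_neq[OF continuous_on_Qcs continuous_on_const, of q 0]
  by (simp add: Qcs_eq_0_iff set_diff_eq)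

lemma fueterD_SLinv_qslice:
  assumes J: "J \<in> qsphere" and nz: "Qcs_complex q z \<noteq> 0"
  shows "fueterD (\<lambda>p. SLinv (qslice J z) p) q = qslice J (- 2 / Qcs_complex q z)"
proof -
  have "fueterD (\<lambda>p. SLinv (qslice J z) p) q = (-2) *\<^sub>R qinv (Qcs (qslice J z) q)"
    using assms by (simp add: fueterD_SLinv Qcs_qslice qslice_eq_0_iff)
  also have "\<dots> = qslice J ((-2) *\<^sub>R inverse (Qcs_complex q z))"
    by (simp only: Qcs_qslice[OF J] qinv_qslice[OF J] qslice_scaleR)
  finally show ?thesis
    by (simp add: scaleR_conv_of_real divide_inverse)
qed

theorem proposition4p10:
  fixes q :: quat
  shows "intrinsic_slice_hyperholomorphic (UNIV - qclass q)
           (\<lambda>s. fueterD (\<lambda>p. SLinv s p) q)"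
proof (rule intrinsic_slice_hyperholomorphicI)
  have U: "qreal u + v *\<^sub>R J \<in> UNIV - qclass q \<longleftrightarrow> Qcs_complex q (Complex u v) \<noteq> 0"
    if "J \<in> qsphere" for u v J
    using qslice_in_qclass_iff[OF that, of "Complex u v" q] by (simp add: qslice_Complex)
  show "open (UNIV - qclass q)"
    by (rule open_compl_qclass)
  show "axially_symmetric (UNIV - qclass q)"
    using U by (simp add: axially_symmetric_def)
  show "fueterD (\<lambda>p. SLinv (qreal u + v *\<^sub>R J) p) q = qslice J (- 2 / Qcs_complex q (Complex u v))"
    if "J \<in> qsphere" "qreal u + v *\<^sub>R J \<in> UNIV - qclass q" for u v J
    using fueterD_SLinv_qslice[of J q "Complex u v"] that U by (simp add: qslice_Complex)
  show "(\<lambda>z. - 2 / Qcs_complex q z) field_differentiable at (Complex u v)"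
    if "J \<in> qsphere" "qreal u + v *\<^sub>R J \<in> UNIV - qclass q" for u v J
    using that U unfolding Qcs_complex_def by (auto intro!: derivative_intros)
  show "- 2 / Qcs_complex q (cnj z) = cnj (- 2 / Qcs_complex q z)" for z
    by (simp add: Qcs_complex_cnj)
qed

end
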